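(* Let $\rho_A,\rho_B\in\mathcal{P}(\mathcal{X})$ and let $(\rho,m)$, with $\rho:[0,1]\to\mathbb{R}^{\mathcal{X}}$ and $m:[0,1]\to\mathbb{R}^{\mathcal{X}\times\mathcal{X}}$ measurable, satisfy $\mathcal{E}(\rho,m)\le\bar E<\infty$. Then $m$ is bounded in $L^2((0,1),\mathbb{R}^{\mathcal{X}\times\mathcal{X}})$ and $\rho$ is bounded in $H^{1,2}((0,1),\mathbb{R}^{\mathcal{X}})\cap C^{0,1/2}([0,1],\mathbb{R}^{\mathcal{X}})$, with bounds depending only on $\mathcal{X}$ (with $Q,\pi$) and $\bar E$.
   Context: Let $\mathcal{X}$ be a finite set and $Q:\mathcal{X}\times\mathcal{X}\to[0,\infty)$ with $Q(x,x)=0$, the transition rate matrix of an irreducible continuous-time Markov chain which is reversible with respect to its unique stationary distribution $\pi:\mathcal{X}\to(0,1]$, $\sum_x\pi(x)=1$, i.e. $\pi(x)Q(x,y)=\pi(y)Q(y,x)$. Let $\mathcal{P}(\mathcal{X})=\{\rho:\mathcal{X}\to[0,\infty):\sum_x\pi(x)\rho(x)=1\}$. Inner products: $\langle\phi,\psi\rangle_\pi=\sum_x\phi(x)\psi(x)\pi(x)$, $\langle\Phi,\Psi\rangle_Q=\frac12\sum_{x,y}\Phi(x,y)\Psi(x,y)Q(x,y)\pi(x)$. Discrete gradient $(\nabla_{\mathcal{X}}\psi)(x,y)=\psi(x)-\psi(y)$. An averaging function $\theta:[0,\infty)^2\to[0,\infty)$ is fixed which is continuous, concave, 1-homogeneous,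 symmetric, $C^\infty$ on $(0,\infty)^2$, with $\theta(0,s)=\theta(s,0)=0$, $\theta(s,s)=s$, $\theta(s,t)>0$ for $s,t>0$, and nondecreasing in each argument; $\theta(s,t)=-\infty$ if $\min\{s,t\}<0$. Let $\alpha(s,t,m)=m^2/\theta(s,t)$ if $\theta(s,t)>0$, $0$ if $\theta(s,t)=0$ and $m=0$, $+\infty$ otherwise. $\mathcal{A}(\rho,m)=\frac12\int_0^1\sum_{x,y}\alpha(\rho(t,x),\rho(t,y),m(t,x,y))Q(x,y)\pi(x)\,dt$. $\mathcal{CE}(\rho_A,\rho_B)$ is the set of measurable pairs $(\rho,m)$ with $\int_0^1\langle\partial_t\varphi(t,\cdot),\rho(t,\cdot)\rangle_\pi+\langle\nabla_{\mathcal{X}}\varphi(t,\cdot),m(t,\cdot)\rangle_Q\,dt=\langle\varphi(1,\cdot),\rho_B\rangle_\pi-\langle\varphi(0,\cdot),\rho_A\rangle_\pi$ for all $\varphi\in C^1([0,1],\mathbb{R}^{\mathcal{X}})$. $\mathcal{E}(\rho,m)=\mathcal{A}(\rho,m)$ if $(\rho,m)\in\mathcal{CE}(\rho_A,\rho_B)$ and $+\infty$ otherwise. *)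

theory Defs
  imports "HOL-Analysis.Analysis"
begin

definition markov_setting :: "('x::finite \<Rightarrow> 'x \<Rightarrow> real) \<Rightarrow> ('x \<Rightarrow> real) \<Rightarrow> bool" where
  "markov_setting Q \<pi> \<longleftrightarrow>
     (\<forall>x y. Q x y \<ge> 0) \<and> (\<forall>x. Q x x = 0) \<and>
     (\<forall>x y. (x, y) \<in> {(a, b). Q a b > 0}\<^sup>*) \<and>
     (\<forall>x. 0 < \<pi> x \<and> \<pi> x \<le> 1) \<and> (\<Sum>x\<in>UNIV. \<pi> x) = 1 \<and>
     (\<forall>x y. \<pi> x * Q x y = \<pi> y * Q y x)"

definition prob_densities :: "('x::finite \<Rightarrow> real) \<Rightarrow> ('x \<Rightarrow> real) set" where
  "prob_densities \<pi> = {\<rho>. (\<forall>x. \<rho> x \<ge> 0) \<and> (\<Sum>x\<in>UNIV. \<pi> x * \<rho> x) = 1}"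

definition inner_pi :: "('x::finite \<Rightarrow> real) \<Rightarrow> ('x \<Rightarrow> real) \<Rightarrow> ('x \<Rightarrow> real) \<Rightarrow> real" where
  "inner_pi \<pi> \<phi> \<psi> = (\<Sum>x\<in>UNIV. \<phi> x * \<psi> x * \<pi> x)"

definition inner_Q :: "('x::finite \<Rightarrow> 'x \<Rightarrow> real) \<Rightarrow> ('x \<Rightarrow> real)
    \<Rightarrow> ('x \<Rightarrow> 'x \<Rightarrow> real) \<Rightarrow> ('x \<Rightarrow> 'x \<Rightarrow> real) \<Rightarrow> real" where
  "inner_Q Q \<pi> \<Phi> \<Psi> = (1/2) * (\<Sum>x\<in>UNIV. \<Sum>y\<in>UNIV. \<Phi> x y * \<Psi> x y * Q x y * \<pi> x)"

definition grad_X :: "('x \<Rightarrow> real) \<Rightarrow> 'x \<Rightarrow> 'x \<Rightarrow> real" where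
  "grad_X \<psi> x y = \<psi> x - \<psi> y"

text \<open>C-infinity on an open set S, for functions of two real variables: there is a
  family of functions containing f which is closed under taking (continuous) partial
  derivatives (with respect to both variables).\<close>
definition smooth2_on :: "(real \<times> real) set \<Rightarrow> (real \<times> real \<Rightarrow> real) \<Rightarrow> bool" where
  "smooth2_on S f \<longleftrightarrow> (\<exists>F. f \<in> F \<and> (\<forall>g\<in>F. continuous_on S g \<and>
      (\<exists>g1\<in>F. \<exists>g2\<in>F. \<forall>z\<in>S.
         (g has_derivative (\<lambda>h. fst h * g1 z + snd h * g2 z)) (at z))))"

definition averaging_function :: "(real \<Rightarrow> real \<Rightarrow> real) \<Rightarrow> bool" where
  "averaging_function \<theta> \<longleftrightarrow>
     continuous_on ({0..} \<times> {0..}) (\<lambda>(s, t). \<theta> s t) \<and>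
     concave_on ({0..} \<times> {0..}) (\<lambda>(s, t). \<theta> s t) \<and>
     (\<forall>l s t. l \<ge> 0 \<longrightarrow> s \<ge> 0 \<longrightarrow> t \<ge> 0 \<longrightarrow> \<theta> (l * s) (l * t) = l * \<theta> s t) \<and>
     (\<forall>s t. s \<ge> 0 \<longrightarrow> t \<ge> 0 \<longrightarrow> \<theta> s t = \<theta> t s) \<and>
     smooth2_on ({0<..} \<times> {0<..}) (\<lambda>(s, t). \<theta> s t) \<and>
     (\<forall>s. s \<ge> 0 \<longrightarrow> \<theta> 0 s = 0 \<and> \<theta> s 0 = 0) \<and>
     (\<forall>s. s \<ge> 0 \<longrightarrow> \<theta> s s = s) \<and>
     (\<forall>s t. s > 0 \<longrightarrow> t > 0 \<longrightarrow> \<theta> s t > 0) \<and>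
     (\<forall>s s' t. 0 \<le> s \<longrightarrow> s \<le> s' \<longrightarrow> 0 \<le> t \<longrightarrow> \<theta> s t \<le> \<theta> s' t) \<and>
     (\<forall>s t t'. 0 \<le> s \<longrightarrow> 0 \<le> t \<longrightarrow> t \<le> t' \<longrightarrow> \<theta> s t \<le> \<theta> s t')"

text \<open>theta is (by convention) minus infinity if an argument is negative; then
  alpha is +infinity.\<close>
definition alpha :: "(real \<Rightarrow> real \<Rightarrow> real) \<Rightarrow> real \<Rightarrow> real \<Rightarrow> real \<Rightarrow> ennreal" where
  "alpha \<theta> s t m =
     (if s \<ge> 0 \<and> t \<ge> 0 \<and> \<theta> s t > 0 then ennreal (m\<^sup>2 / \<theta> s t)
      else if s \<ge> 0 \<and> t \<ge> 0 \<and> \<theta> s t = 0 \<and> m = 0 then 0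
      else \<infinity>)"

definition action :: "(real \<Rightarrow> real \<Rightarrow> real) \<Rightarrow> ('x::finite \<Rightarrow> 'x \<Rightarrow> real) \<Rightarrow> ('x \<Rightarrow> real)
    \<Rightarrow> (real \<Rightarrow> 'x \<Rightarrow> real) \<Rightarrow> (real \<Rightarrow> 'x \<Rightarrow> 'x \<Rightarrow> real) \<Rightarrow> ennreal" where
  "action \<theta> Q \<pi> \<rho> m = (1/2) * (\<integral>\<^sup>+ t\<in>{0..1}.
      (\<Sum>x\<in>UNIV. \<Sum>y\<in>UNIV. alpha \<theta> (\<rho> t x) (\<rho> t y) (m t x y) * ennreal (Q x y * \<pi> x)) \<partial>lborel)"

definition C1_test :: "(real \<Rightarrow> 'x \<Rightarrow> real) \<Rightarrow> (real \<Rightarrow> 'x \<Rightarrow> real) \<Rightarrow> bool" where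
  "C1_test \<phi> \<phi>' \<longleftrightarrow> (\<forall>x. (\<forall>t\<in>{0..1}. ((\<lambda>s. \<phi> s x) has_real_derivative \<phi>' t x) (at t within {0..1}))
                         \<and> continuous_on {0..1} (\<lambda>t. \<phi>' t x))"

definition CE :: "('x::finite \<Rightarrow> 'x \<Rightarrow> real) \<Rightarrow> ('x \<Rightarrow> real) \<Rightarrow> ('x \<Rightarrow> real) \<Rightarrow> ('x \<Rightarrow> real)
    \<Rightarrow> ((real \<Rightarrow> 'x \<Rightarrow> real) \<times> (real \<Rightarrow> 'x \<Rightarrow> 'x \<Rightarrow> real)) set" where
  "CE Q \<pi> \<rho>A \<rho>B = {(\<rho>, m).
     (\<forall>x. set_borel_measurable lborel {0..1} (\<lambda>t. \<rho> t x)) \<and>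
     (\<forall>x y. set_borel_measurable lborel {0..1} (\<lambda>t. m t x y)) \<and>
     (\<forall>\<phi> \<phi>'. C1_test \<phi> \<phi>' \<longrightarrow>
        set_integrable lborel {0..1}
          (\<lambda>t. inner_pi \<pi> (\<phi>' t) (\<rho> t) + inner_Q Q \<pi> (grad_X (\<phi> t)) (m t)) \<and>
        (LINT t:{0..1}|lborel. inner_pi \<pi> (\<phi>' t) (\<rho> t) + inner_Q Q \<pi> (grad_X (\<phi> t)) (m t))
          = inner_pi \<pi> (\<phi> 1) \<rho>B - inner_pi \<pi> (\<phi> 0) \<rho>A)}"

definition energy :: "(real \<Rightarrow> real \<Rightarrow> real) \<Rightarrow> ('x::finite \<Rightarrow> 'x \<Rightarrow> real) \<Rightarrow> ('x \<Rightarrow> real)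
    \<Rightarrow> ('x \<Rightarrow> real) \<Rightarrow> ('x \<Rightarrow> real)
    \<Rightarrow> (real \<Rightarrow> 'x \<Rightarrow> real) \<Rightarrow> (real \<Rightarrow> 'x \<Rightarrow> 'x \<Rightarrow> real) \<Rightarrow> ennreal" where
  "energy \<theta> Q \<pi> \<rho>A \<rho>B \<rho> m =
     (if (\<rho>, m) \<in> CE Q \<pi> \<rho>A \<rho>B then action \<theta> Q \<pi> \<rho> m else \<infinity>)"

end

theory Submission
  imports Defs
begin

(*
  Testing the continuity equation with phi(t, x) = 1_z(x) psi(t) shows that t -> pi(z) rho_t(z) has
  the integrable weak derivative <grad 1_z, m_t>_Q, so rho agrees almost everywhere with an absolutely
  continuous path. The fluxes of all states sum to zero, so this path conserves mass, and it stays
  nonnegative because the action is infinite wherever rho is negative at a state with an outgoing edge;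
  hence 0 <= rho <= sum_x 1/pi(x). On such densities theta is at most sum_x 1/pi(x), so the action
  bounds m in L^2; Cauchy-Schwarz for the Q-inner product then bounds the time derivative of rho in L^2,
  and Cauchy-Schwarz in time gives the Hoelder-1/2 estimate.
*)

section \<open>Integration on the real line\<close>

lemma AE_zero_if_halfline_integrals_zero:
  fixes h :: "real \<Rightarrow> real"
  assumes h: "integrable lborel h"
    and zero: "\<And>a. (\<integral>t. indicator {a<..} t * h t \<partial>lborel) = 0"
  shows "AE t in lborel. h t = 0"
proof -
  define P where "P t = max (h t) 0" for t
  define N where "N t = max (- h t) 0" for t
  have P: "integrable lborel P" and N: "integrable lborel N"
    unfolding P_def N_def using h by auto
  have [measurable]: "P \<in> borel_measurable borel" "N \<in> borel_measurable borel"
    using P N by auto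
  have nonneg: "0 \<le> P t" "0 \<le> N t" for t
    by (simp_all add: P_def N_def)
  have ind_int: "integrable lborel (\<lambda>t. indicator {a<..} t * f t)" if "integrable lborel f"
    for f :: "real \<Rightarrow> real" and a :: real
    using integrable_mult_indicator[OF _ that, of "{a<..}"] by simp
  have halfline: "emeasure (density lborel f) {a<..} = ennreal (\<integral>t. indicator {a<..} t * f t \<partial>lborel)"
    if f: "integrable lborel f" "\<And>t. 0 \<le> f t" for f :: "real \<Rightarrow> real" and a :: real
  proof -
    have "emeasure (density lborel f) {a<..} = (\<integral>\<^sup>+t. ennreal (indicator {a<..} t * f t) \<partial>lborel)"
      using f by (subst emeasure_density) (auto intro!: nn_integral_cong split: split_indicator)
    also have "\<dots> = ennreal (\<integral>t. indicator {a<..} t * f t \<partial>lborel)"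
      using f by (intro nn_integral_eq_integral ind_int) auto
    finally show ?thesis .
  qed
  have "(\<integral>t. indicator {a<..} t * P t \<partial>lborel) - (\<integral>t. indicator {a<..} t * N t \<partial>lborel)
      = (\<integral>t. indicator {a<..} t * P t - indicator {a<..} t * N t \<partial>lborel)" for a
    by (rule Bochner_Integration.integral_diff[symmetric]) (intro ind_int P N)+
  also have "\<dots> a = (\<integral>t. indicator {a<..} t * h t \<partial>lborel)" for a
    by (rule Bochner_Integration.integral_cong) (auto simp: P_def N_def split: split_indicator)
  finally have "(\<integral>t. indicator {a<..} t * P t \<partial>lborel) = (\<integral>t. indicator {a<..} t * N t \<partial>lborel)" for a
    using zero by simp
  then have "density lborel P = density lborel N"
    by (intro measure_eqI_lessThan) (simp_all add: halfline[OF P nonneg(1)] halfline[OF N nonneg(2)])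
  then have "AE t in lborel. ennreal (P t) = ennreal (N t)"
    by (intro sigma_finite_measure.density_unique[OF sigma_finite_lborel]) (simp_all add: nonneg)
  then show ?thesis
    by eventually_elim (auto simp: P_def N_def max_def split: if_splits)
qed

lemma ramp_tendsto_indicator:
  "(\<lambda>i. max 0 (min 1 (real i * (t - a)))) \<longlonglongrightarrow> indicator {a<..} t"
proof (cases "t \<le> a")
  case True
  then have "max 0 (min 1 (real i * (t - a))) = 0" for i
    using mult_nonneg_nonpos[of "real i" "t - a"] by linarith
  then show ?thesis using True by simp
next
  case False
  obtain N :: nat where N: "1 / (t - a) < N" using reals_Archimedean2 by blast
  have "max 0 (min 1 (real i * (t - a))) = 1" if "N \<le> i" for i
  proof -
    have "1 / (t - a) < real i" using N that by linarith
    then show ?thesis using False by (simp add: field_simps)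
  qed
  then have "(\<lambda>i. max 0 (min 1 (real i * (t - a)))) \<longlonglongrightarrow> 1"
    by (intro tendsto_eventually) (auto simp: eventually_sequentially)
  then show ?thesis using False by simp
qed

lemma AE_zero_if_continuous_integrals_zero:
  fixes h :: "real \<Rightarrow> real"
  assumes h: "integrable lborel h"
    and zero: "\<And>k. continuous_on UNIV k \<Longrightarrow> (\<And>t. \<bar>k t\<bar> \<le> 1) \<Longrightarrow> (\<integral>t. k t * h t \<partial>lborel) = 0"
  shows "AE t in lborel. h t = 0"
proof (rule AE_zero_if_halfline_integrals_zero[OF h])
  fix a :: real
  define k where "k i t = max 0 (min 1 (real i * (t - a)))" for i :: nat and t
  have k_cont: "continuous_on UNIV (k i)" for i
    unfolding k_def by (intro continuous_intros)
  have k_bound: "\<bar>k i t\<bar> \<le> 1" for i t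
    unfolding k_def by auto
  have [measurable]: "k i \<in> borel_measurable borel" "h \<in> borel_measurable borel" for i
    using k_cont h by (auto intro: borel_measurable_continuous_onI)
  have "(\<lambda>i. \<integral>t. k i t * h t \<partial>lborel) \<longlonglongrightarrow> (\<integral>t. indicator {a<..} t * h t \<partial>lborel)"
  proof (rule integral_dominated_convergence[where w="\<lambda>t. \<bar>h t\<bar>"])
    show "AE t in lborel. (\<lambda>i. k i t * h t) \<longlonglongrightarrow> indicator {a<..} t * h t"
      unfolding k_def by (intro AE_I2 tendsto_mult ramp_tendsto_indicator tendsto_const)
    show "AE t in lborel. norm (k i t * h t) \<le> \<bar>h t\<bar>" for i
      using k_bound by (auto simp: abs_mult intro!: mult_left_le_one_le)
  qed (use h in auto)
  then show "(\<integral>t. indicator {a<..} t * h t \<partial>lborel) = 0"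
    unfolding zero[OF k_cont k_bound] LIMSEQ_const_iff by simp
qed

lemma set_integral_swap_triangle:
  fixes k G :: "real \<Rightarrow> real"
  assumes [measurable]: "k \<in> borel_measurable borel" and k_bound: "\<And>s. \<bar>k s\<bar> \<le> 1"
    and G: "set_integrable lborel {a..b} G"
  shows "(LINT t:{a..b}|lborel. (LINT s:{t..b}|lborel. k s) * G t)
       = (LINT s:{a..b}|lborel. k s * (LINT t:{a..s}|lborel. G t))"
proof -
  define G' where "G' t = indicator {a..b} t * G t" for t
  have G': "integrable lborel G'" using G unfolding G'_def set_integrable_def by simp
  have [measurable]: "G' \<in> borel_measurable borel" using G' by auto
  define F where "F t s = (if a \<le> t \<and> t \<le> s \<and> s \<le> b then k s * G' t else 0)" for t s
  have [measurable]: "case_prod F \<in> borel_measurable (lborel \<Otimes>\<^sub>M lborel)"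
    unfolding F_def by measurable
  have ind: "integrable lborel (indicator {a..b} :: real \<Rightarrow> real)"
    by (simp add: integrable_indicator_iff emeasure_lborel_Icc_eq)
  have F_bound: "\<bar>F t s\<bar> \<le> \<bar>G' t\<bar> * indicator {a..b} s" for t s
    using k_bound[of s] by (auto simp: F_def abs_mult indicator_def intro: mult_left_le_one_le)
  have F: "integrable (lborel \<Otimes>\<^sub>M lborel) (case_prod F)"
  proof (rule lborel_pair.Fubini_integrable)
    show "integrable lborel (\<lambda>t. LINT s|lborel. norm (case_prod F (t, s)))"
    proof (rule Bochner_Integration.integrable_bound)
      define c where "c = (LINT s|lborel. indicator {a..b} s :: real)"
      show "integrable lborel (\<lambda>t. c * G' t)"
        using G' by simp
      have c: "0 \<le> c" by (simp add: c_def)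
      have "norm (LINT s|lborel. norm (F t s)) \<le> norm (c * G' t)" for t
      proof -
        have "(LINT s|lborel. norm (F t s)) \<le> (LINT s|lborel. \<bar>G' t\<bar> * indicator {a..b} s)"
          using F_bound ind by (intro Bochner_Integration.integral_mono') auto
        also have "\<dots> = c * \<bar>G' t\<bar>"
          by (simp add: c_def)
        finally show ?thesis
          using c by (simp add: abs_mult)
      qed
      then show "AE t in lborel. norm (LINT s|lborel. norm (case_prod F (t, s))) \<le> norm (c * G' t)"
        by simp
    qed measurable
    show "AE t in lborel. integrable lborel (\<lambda>s. case_prod F (t, s))"
    proof (rule AE_I2)
      fix t
      show "integrable lborel (\<lambda>s. case_prod F (t, s))"
        by (rule Bochner_Integration.integrable_bound[where f="\<lambda>s. \<bar>G' t\<bar> * indicator {a..b} s"])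
          (use ind F_bound in auto)
    qed
  qed measurable
  then have "(LINT t|lborel. LINT s|lborel. F t s) = (LINT s|lborel. LINT t|lborel. F t s)"
    using lborel_pair.Fubini_integral[OF F] by simp
  moreover have "(LINT s|lborel. F t s) = indicator {a..b} t * ((LINT s:{t..b}|lborel. k s) * G t)" for t
  proof -
    have "(LINT s|lborel. F t s) = (LINT s|lborel. (indicator {t..b} s * k s) * G' t)"
      by (rule Bochner_Integration.integral_cong) (auto simp: F_def G'_def indicator_def)
    then show ?thesis
      by (simp add: G'_def set_lebesgue_integral_def indicator_def)
  qed
  moreover have "(LINT t|lborel. F t s) = indicator {a..b} s * (k s * (LINT t:{a..s}|lborel. G t))" for s
  proof -
    have "(LINT t|lborel. F t s) = (LINT t|lborel. k s * indicator {a..b} s * (indicator {a..s} t * G t))"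
      by (rule Bochner_Integration.integral_cong) (auto simp: F_def G'_def indicator_def)
    then show ?thesis
      by (simp add: set_lebesgue_integral_def)
  qed
  ultimately show ?thesis
    by (simp add: set_lebesgue_integral_def)
qed

lemma has_real_derivative_tail_integral:
  fixes k :: "real \<Rightarrow> real"
  assumes k: "continuous_on {a..b} k" and t: "t \<in> {a..b}"
  shows "((\<lambda>x. LINT s:{x..b}|lborel. k s) has_real_derivative - k t) (at t within {a..b})"
proof (rule has_field_derivative_transform_within[OF _ zero_less_one t])
  show "((\<lambda>x. integral {x..b} k) has_real_derivative - k t) (at t within {a..b})"
    by (rule integral_has_real_derivative'[OF k t])
  show "integral {x..b} k = (LINT s:{x..b}|lborel. k s)" if "x \<in> {a..b}" for x
    using that k
    by (intro set_borel_integral_eq_integral(2)[symmetric] borel_integrable_atLeastAtMost')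
      (auto intro: continuous_on_subset)
qed

lemma nn_integral_cmult_le:
  fixes c :: real
  assumes c: "0 \<le> c"
  shows "(\<integral>\<^sup>+x. ennreal c * f x \<partial>M) \<le> ennreal c * integral\<^sup>N M f"
proof (cases "c = 0")
  case False
  with c have inv: "ennreal (1/c) * ennreal c = 1"
    by (simp flip: ennreal_mult)
  show ?thesis
    unfolding nn_integral_def[of M "\<lambda>x. ennreal c * f x"]
  proof (rule SUP_least)
    fix h assume h: "h \<in> {h. simple_function M h \<and> h \<le> (\<lambda>x. ennreal c * f x)}"
    define h' where "h' = (\<lambda>x. ennreal (1/c) * h x)"
    have h': "simple_function M h'" using h by (auto simp: h'_def)
    have "h' x \<le> f x" for x
    proof -
      have "ennreal (1/c) * h x \<le> ennreal (1/c) * (ennreal c * f x)"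
        using h by (intro mult_left_mono) (auto simp: le_fun_def)
      then show ?thesis by (simp add: h'_def mult.assoc[symmetric] inv)
    qed
    then have "integral\<^sup>S M h' \<le> integral\<^sup>N M f"
      unfolding nn_integral_def using h' by (auto intro!: SUP_upper simp: le_fun_def)
    moreover have "integral\<^sup>S M h = ennreal c * integral\<^sup>S M h'"
      using h' by (subst simple_integral_mult[symmetric])
        (auto intro!: simple_integral_cong simp: h'_def mult.assoc[symmetric] inv mult.commute[of "ennreal c"])
    ultimately show "integral\<^sup>S M h \<le> ennreal c * integral\<^sup>N M f"
      by (simp add: mult_left_mono)
  qed
qed simp

lemma abs_set_integral_le_sqrt_L2:
  fixes g :: "real \<Rightarrow> real"
  assumes st: "s \<le> t" and g: "set_integrable lborel {s..t} g" and B: "0 \<le> B"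
    and L2: "(\<integral>\<^sup>+x\<in>{s..t}. ennreal ((g x)\<^sup>2) \<partial>lborel) \<le> ennreal B"
  shows "\<bar>LINT x:{s..t}|lborel. g x\<bar> \<le> sqrt B * sqrt (t - s)"
proof -
  define L where "L = (\<integral>x. \<bar>indicator {s..t} x * g x\<bar> \<partial>lborel)"
  have abs_le: "\<bar>LINT x:{s..t}|lborel. g x\<bar> \<le> L"
    unfolding L_def set_lebesgue_integral_def by (simp add: integral_abs_bound)
  have L_int: "integrable lborel (\<lambda>x. \<bar>indicator {s..t} x * g x\<bar>)"
    using g by (simp add: set_integrable_def)
  define F where "F x = ennreal \<bar>indicator {s..t} x * g x\<bar>" for x
  define H where "H x = (indicator {s..t} x :: ennreal)" for x
  have [measurable]: "F \<in> borel_measurable lborel" "H \<in> borel_measurable lborel"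
    using L_int unfolding F_def H_def by auto
  have "(\<integral>\<^sup>+x. F x * H x \<partial>lborel) = (\<integral>\<^sup>+x. F x \<partial>lborel)"
    by (rule nn_integral_cong) (auto simp: F_def H_def indicator_def)
  also have "\<dots> = ennreal L"
    unfolding F_def L_def by (rule nn_integral_eq_integral[OF L_int]) simp
  finally have FH: "(\<integral>\<^sup>+x. F x * H x \<partial>lborel) = ennreal L" .
  have "(\<integral>\<^sup>+x. F x ^ 2 \<partial>lborel) = (\<integral>\<^sup>+x\<in>{s..t}. ennreal ((g x)\<^sup>2) \<partial>lborel)"
    by (rule nn_integral_cong) (auto simp: F_def ennreal_power indicator_def)
  then have FF: "(\<integral>\<^sup>+x. F x ^ 2 \<partial>lborel) \<le> ennreal B"
    using L2 by simp
  have "(\<integral>\<^sup>+x. H x ^ 2 \<partial>lborel) = (\<integral>\<^sup>+x. H x \<partial>lborel)"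
    by (rule nn_integral_cong) (simp add: H_def indicator_def)
  then have HH: "(\<integral>\<^sup>+x. H x ^ 2 \<partial>lborel) = ennreal (t - s)"
    using st by (simp add: H_def)
  have "ennreal (L\<^sup>2) = (\<integral>\<^sup>+x. F x * H x \<partial>lborel)\<^sup>2"
    by (simp add: FH L_def ennreal_power)
  also have "\<dots> \<le> (\<integral>\<^sup>+x. F x ^ 2 \<partial>lborel) * (\<integral>\<^sup>+x. H x ^ 2 \<partial>lborel)"
    by (rule Cauchy_Schwarz_nn_integral) measurable
  also have "\<dots> \<le> ennreal (B * (t - s))"
    unfolding HH using FF B st by (simp add: ennreal_mult mult_right_mono)
  finally have "L\<^sup>2 \<le> B * (t - s)"
    using B st by (subst (asm) ennreal_le_iff) auto
  then have "L \<le> sqrt B * sqrt (t - s)"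
    by (simp add: L_def real_le_rsqrt real_sqrt_mult[symmetric])
  with abs_le show ?thesis by linarith
qed

lemma negative_on_interval:
  fixes f :: "real \<Rightarrow> real"
  assumes f: "continuous_on {l..u} f" and lu: "l < u" and t: "t \<in> {l..u}" and neg: "f t < 0"
  obtains a b where "a < b" "{a..b} \<subseteq> {l..u}" "\<And>x. x \<in> {a..b} \<Longrightarrow> f x < 0"
proof -
  obtain d where d: "0 < d" and close: "\<And>x. x \<in> {l..u} \<Longrightarrow> dist x t < d \<Longrightarrow> dist (f x) (f t) < - f t"
    using f t neg unfolding continuous_on_iff by (metis neg_0_less_iff_less)
  define a where "a = max l (t - d/2)"
  define b where "b = min u (t + d/2)"
  show ?thesis
  proof
    show "a < b" using lu t d by (auto simp: a_def b_def)
    show "{a..b} \<subseteq> {l..u}" by (auto simp: a_def b_def)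
    show "f x < 0" if x: "x \<in> {a..b}" for x
    proof -
      have "x \<in> {l..u}" "dist x t < d"
        using x d by (auto simp: a_def b_def dist_real_def)
      then show ?thesis
        using close[of x] by (auto simp: dist_real_def)
    qed
  qed
qed

section \<open>Inner products on the state space\<close>

lemma inner_pi_indicator_scaled:
  fixes \<pi> f :: "'x::finite \<Rightarrow> real"
  shows "inner_pi \<pi> (\<lambda>x. indicator {z} x * c) f = c * f z * \<pi> z"
proof -
  have "(\<Sum>x\<in>UNIV. indicator {z} x * c * f x * \<pi> x) = (\<Sum>x\<in>UNIV. if x = z then c * f z * \<pi> z else 0)"
    by (rule sum.cong) (auto simp: indicator_def)
  then show ?thesis
    unfolding inner_pi_def by simp
qed

lemma inner_Q_grad_scaled:
  fixes Q :: "'x::finite \<Rightarrow> 'x \<Rightarrow> real"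
  shows "inner_Q Q \<pi> (grad_X (\<lambda>x. f x * c)) M = c * inner_Q Q \<pi> (grad_X f) M"
  unfolding inner_Q_def grad_X_def by (simp add: sum_distrib_left algebra_simps)

lemma sum_inner_Q_grad_indicator:
  fixes Q :: "'x::finite \<Rightarrow> 'x \<Rightarrow> real"
  shows "(\<Sum>z\<in>UNIV. inner_Q Q \<pi> (grad_X (indicator {z})) M) = 0"
proof -
  define f where "f z a b = (indicator {z} a - indicator {z} b) * M a b * Q a b * \<pi> a" for z a b :: 'x
  have "(\<Sum>z\<in>UNIV. f z a b) = 0" for a b
    by (simp add: f_def sum_distrib_right[symmetric] sum_subtractf indicator_def)
  then have "(\<Sum>a\<in>UNIV. \<Sum>b\<in>UNIV. \<Sum>z\<in>UNIV. f z a b) = 0"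
    by simp
  moreover have "(\<Sum>z\<in>UNIV. \<Sum>a\<in>UNIV. \<Sum>b\<in>UNIV. f z a b) = (\<Sum>a\<in>UNIV. \<Sum>b\<in>UNIV. \<Sum>z\<in>UNIV. f z a b)"
    by (subst sum.swap) (rule sum.cong[OF refl], rule sum.swap)
  moreover have "(\<Sum>z\<in>UNIV. inner_Q Q \<pi> (grad_X (indicator {z})) M)
      = (1/2) * (\<Sum>z\<in>UNIV. \<Sum>a\<in>UNIV. \<Sum>b\<in>UNIV. f z a b)"
    unfolding inner_Q_def grad_X_def f_def by (simp add: sum_distrib_left)
  ultimately show ?thesis
    by simp
qed

lemma inner_Q_nonneg:
  fixes Q :: "'x::finite \<Rightarrow> 'x \<Rightarrow> real"
  assumes "\<And>x y. 0 \<le> Q x y * \<pi> x"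
  shows "0 \<le> inner_Q Q \<pi> \<Phi> \<Phi>"
  unfolding inner_Q_def using assms
  by (auto intro!: sum_nonneg simp: mult.assoc[of "\<Phi> _ _ * \<Phi> _ _"])

lemma inner_Q_square_le:
  fixes Q :: "'x::finite \<Rightarrow> 'x \<Rightarrow> real"
  assumes w: "\<And>x y. 0 \<le> Q x y * \<pi> x"
  shows "(inner_Q Q \<pi> \<Phi> \<Psi>)\<^sup>2 \<le> inner_Q Q \<pi> \<Phi> \<Phi> * inner_Q Q \<pi> \<Psi> \<Psi>"
proof -
  define v where "v \<Phi>' p = \<Phi>' (fst p) (snd p) * sqrt (Q (fst p) (snd p) * \<pi> (fst p))"
    for \<Phi>' :: "'x \<Rightarrow> 'x \<Rightarrow> real" and p
  have eq: "inner_Q Q \<pi> \<Phi>' \<Psi>' = (\<Sum>p\<in>UNIV. v \<Phi>' p * v \<Psi>' p) / 2" for \<Phi>' \<Psi>'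
  proof -
    have "v \<Phi>' (x, y) * v \<Psi>' (x, y) = \<Phi>' x y * \<Psi>' x y * (sqrt (Q x y * \<pi> x) * sqrt (Q x y * \<pi> x))" for x y
      by (simp add: v_def mult_ac)
    also have "\<dots> x y = \<Phi>' x y * \<Psi>' x y * Q x y * \<pi> x" for x y
      using w[of x y] by (simp add: mult.assoc)
    finally have "(\<Sum>x\<in>UNIV. \<Sum>y\<in>UNIV. v \<Phi>' (x, y) * v \<Psi>' (x, y))
        = (\<Sum>x\<in>UNIV. \<Sum>y\<in>UNIV. \<Phi>' x y * \<Psi>' x y * Q x y * \<pi> x)"
      by simp
    moreover have "(\<Sum>p\<in>UNIV. v \<Phi>' p * v \<Psi>' p) = (\<Sum>x\<in>UNIV. \<Sum>y\<in>UNIV. v \<Phi>' (x, y) * v \<Psi>' (x, y))"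
      by (simp add: sum.cartesian_product)
    ultimately show ?thesis
      unfolding inner_Q_def by simp
  qed
  have "(\<Sum>p\<in>UNIV. v \<Phi> p * v \<Psi> p)\<^sup>2 \<le> (\<Sum>p\<in>UNIV. v \<Phi> p * v \<Phi> p) * (\<Sum>p\<in>UNIV. v \<Psi> p * v \<Psi> p)"
    using Cauchy_Schwarz_ineq_sum[of "v \<Phi>" "v \<Psi>" UNIV] by (simp add: power2_eq_square)
  then show ?thesis
    unfolding eq by (simp add: power_divide)
qed

definition density_bound :: "('x::finite \<Rightarrow> real) \<Rightarrow> real" where
  "density_bound \<pi> = (\<Sum>x\<in>UNIV. 1 / \<pi> x)"

definition rate_mass :: "('x::finite \<Rightarrow> 'x \<Rightarrow> real) \<Rightarrow> ('x \<Rightarrow> real) \<Rightarrow> real" where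
  "rate_mass Q \<pi> = (\<Sum>x\<in>UNIV. \<Sum>y\<in>UNIV. Q x y * \<pi> x)"

lemma inner_Q_grad_indicator_le:
  fixes Q :: "'x::finite \<Rightarrow> 'x \<Rightarrow> real"
  assumes w: "\<And>x y. 0 \<le> Q x y * \<pi> x"
  shows "inner_Q Q \<pi> (grad_X (indicator {z})) (grad_X (indicator {z})) \<le> rate_mass Q \<pi> / 2"
proof -
  have "grad_X (indicator {z}) x y * grad_X (indicator {z}) x y * Q x y * \<pi> x \<le> Q x y * \<pi> x" for x y
    using w[of x y] by (auto simp: grad_X_def indicator_def mult.assoc)
  then show ?thesis
    unfolding inner_Q_def rate_mass_def by (simp add: sum_mono)
qed

section \<open>Paths of finite action\<close>

lemma averaging_function_le:
  assumes af: "averaging_function \<theta>" and "0 \<le> s" "s \<le> R" "0 \<le> t" "t \<le> R"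
  shows "\<theta> s t \<le> R"
proof -
  have "\<theta> s t \<le> \<theta> R t" using af assms unfolding averaging_function_def by blast
  also have "\<dots> \<le> \<theta> R R" using af assms unfolding averaging_function_def by (meson order_trans)
  also have "\<dots> = R" using af assms unfolding averaging_function_def by (meson order_trans)
  finally show ?thesis .
qed

lemma square_le_mult_alpha:
  assumes af: "averaging_function \<theta>" and R: "0 < R" and st: "0 \<le> s" "s \<le> R" "0 \<le> t" "t \<le> R"
  shows "ennreal (v\<^sup>2) \<le> ennreal R * alpha \<theta> s t v"
proof (cases "\<theta> s t > 0")
  case True
  have "v\<^sup>2 = \<theta> s t * (v\<^sup>2 / \<theta> s t)" using True by simp
  also have "\<dots> \<le> R * (v\<^sup>2 / \<theta> s t)"
    using True averaging_function_le[OF af st] by (intro mult_right_mono) auto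
  finally show ?thesis
    using True R st by (simp add: alpha_def ennreal_mult'[symmetric] ennreal_leI)
next
  case False
  then show ?thesis
    using R st by (auto simp: alpha_def ennreal_mult_top)
qed

definition momentum_bound :: "('x::finite \<Rightarrow> real) \<Rightarrow> real \<Rightarrow> real" where
  "momentum_bound \<pi> Ebar = density_bound \<pi> * max Ebar 0"

definition deriv_bound :: "('x::finite \<Rightarrow> 'x \<Rightarrow> real) \<Rightarrow> ('x \<Rightarrow> real) \<Rightarrow> real \<Rightarrow> real" where
  "deriv_bound Q \<pi> Ebar =
     real CARD('x) * density_bound \<pi> * rate_mass Q \<pi> / 2 * momentum_bound \<pi> Ebar"

definition path_bound :: "('x::finite \<Rightarrow> 'x \<Rightarrow> real) \<Rightarrow> ('x \<Rightarrow> real) \<Rightarrow> real \<Rightarrow> real" where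
  "path_bound Q \<pi> Ebar = momentum_bound \<pi> Ebar + deriv_bound Q \<pi> Ebar + (density_bound \<pi>)\<^sup>2
     + density_bound \<pi> + sqrt (density_bound \<pi> * deriv_bound Q \<pi> Ebar)"

locale markov_chain =
  fixes Q :: "'x::finite \<Rightarrow> 'x \<Rightarrow> real" and \<pi> :: "'x \<Rightarrow> real"
  assumes setting: "markov_setting Q \<pi>"
begin

lemma pi_pos: "0 < \<pi> x"
  using setting by (simp add: markov_setting_def)

lemma rate_nonneg: "0 \<le> Q x y"
  using setting by (simp add: markov_setting_def)

lemma reversible: "\<pi> x * Q x y = \<pi> y * Q y x"
  using setting by (simp add: markov_setting_def)

lemma sum_pi: "(\<Sum>x\<in>UNIV. \<pi> x) = 1"
  using setting by (simp add: markov_setting_def)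

lemma weight_nonneg: "0 \<le> Q x y * \<pi> x"
  using rate_nonneg pi_pos by (simp add: less_imp_le)

lemma inv_pi_le_density_bound: "1 / \<pi> z \<le> density_bound \<pi>"
  unfolding density_bound_def
  by (rule member_le_sum) (use pi_pos in \<open>auto intro: less_imp_le\<close>)

lemma density_bound_pos: "0 < density_bound \<pi>"
proof -
  have "0 < 1 / \<pi> undefined" using pi_pos by simp
  then show ?thesis using inv_pi_le_density_bound[of undefined] by linarith
qed

lemma rate_mass_nonneg: "0 \<le> rate_mass Q \<pi>"
  unfolding rate_mass_def by (intro sum_nonneg weight_nonneg)

lemma inner_Q_self_nonneg: "0 \<le> inner_Q Q \<pi> M M"
  by (rule inner_Q_nonneg) (rule weight_nonneg)

lemma momentum_bound_nonneg: "0 \<le> momentum_bound \<pi> Ebar"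
  using density_bound_pos by (simp add: momentum_bound_def)

lemma deriv_bound_nonneg: "0 \<le> deriv_bound Q \<pi> Ebar"
  using density_bound_pos rate_mass_nonneg momentum_bound_nonneg by (simp add: deriv_bound_def)

lemma path_bound_ge:
  "momentum_bound \<pi> Ebar \<le> path_bound Q \<pi> Ebar"
  "(density_bound \<pi>)\<^sup>2 + deriv_bound Q \<pi> Ebar \<le> path_bound Q \<pi> Ebar"
  "density_bound \<pi> \<le> path_bound Q \<pi> Ebar"
  "sqrt (density_bound \<pi> * deriv_bound Q \<pi> Ebar) \<le> path_bound Q \<pi> Ebar"
  using momentum_bound_nonneg[of Ebar] deriv_bound_nonneg[of Ebar] density_bound_pos
  by (simp_all add: path_bound_def)

end

locale finite_action_path = markov_chain Q \<pi>
  for Q :: "'x::finite \<Rightarrow> 'x \<Rightarrow> real" and \<pi> +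
  fixes \<theta> :: "real \<Rightarrow> real \<Rightarrow> real" and Ebar :: real
    and \<rho>A \<rho>B :: "'x \<Rightarrow> real" and \<rho> :: "real \<Rightarrow> 'x \<Rightarrow> real" and m :: "real \<Rightarrow> 'x \<Rightarrow> 'x \<Rightarrow> real"
  assumes averaging: "averaging_function \<theta>"
    and initial: "\<rho>A \<in> prob_densities \<pi>"
    and continuity_equation: "(\<rho>, m) \<in> CE Q \<pi> \<rho>A \<rho>B"
    and action_le: "action \<theta> Q \<pi> \<rho> m \<le> ennreal Ebar"
begin

text \<open>By the continuity equation, \<open>flux z\<close> is the weak time derivative of \<open>\<pi> z * \<rho> t z\<close>.\<close>

definition flux :: "'x \<Rightarrow> real \<Rightarrow> real" where
  "flux z t = inner_Q Q \<pi> (grad_X (indicator {z})) (m t)"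

lemma weak_form_scalar:
  assumes deriv: "\<And>t. t \<in> {0..1} \<Longrightarrow> (\<psi> has_real_derivative \<psi>' t) (at t within {0..1})"
    and cont: "continuous_on {0..1} \<psi>'"
  shows "set_integrable lborel {0..1} (\<lambda>t. \<psi>' t * \<rho> t z * \<pi> z + \<psi> t * flux z t)"
    and "(LINT t:{0..1}|lborel. \<psi>' t * \<rho> t z * \<pi> z + \<psi> t * flux z t)
           = \<psi> 1 * \<rho>B z * \<pi> z - \<psi> 0 * \<rho>A z * \<pi> z"
proof -
  define \<phi> where "\<phi> = (\<lambda>t x. indicator {z} x * \<psi> t)"
  define \<phi>' where "\<phi>' = (\<lambda>t x. indicator {z} x * \<psi>' t)"
  have "C1_test \<phi> \<phi>'"
    unfolding C1_test_def \<phi>_def \<phi>'_def by (auto intro!: DERIV_cmult deriv continuous_intros cont)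
  then have weak: "set_integrable lborel {0..1}
        (\<lambda>t. inner_pi \<pi> (\<phi>' t) (\<rho> t) + inner_Q Q \<pi> (grad_X (\<phi> t)) (m t))
      \<and> (LINT t:{0..1}|lborel. inner_pi \<pi> (\<phi>' t) (\<rho> t) + inner_Q Q \<pi> (grad_X (\<phi> t)) (m t))
          = inner_pi \<pi> (\<phi> 1) \<rho>B - inner_pi \<pi> (\<phi> 0) \<rho>A"
    using continuity_equation unfolding CE_def by auto
  have "inner_pi \<pi> (\<phi>' t) (\<rho> t) + inner_Q Q \<pi> (grad_X (\<phi> t)) (m t)
      = \<psi>' t * \<rho> t z * \<pi> z + \<psi> t * flux z t" for t
    unfolding \<phi>_def \<phi>'_def flux_def
    by (simp add: inner_pi_indicator_scaled inner_Q_grad_scaled)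
  with weak show "set_integrable lborel {0..1} (\<lambda>t. \<psi>' t * \<rho> t z * \<pi> z + \<psi> t * flux z t)"
    and "(LINT t:{0..1}|lborel. \<psi>' t * \<rho> t z * \<pi> z + \<psi> t * flux z t)
           = \<psi> 1 * \<rho>B z * \<pi> z - \<psi> 0 * \<rho>A z * \<pi> z"
    by (simp_all add: \<phi>_def inner_pi_indicator_scaled)
qed

lemma flux_integrable: "set_integrable lborel {0..1} (flux z)"
  using weak_form_scalar(1)[of "\<lambda>_. 1" "\<lambda>_. 0" z] by simp

lemma rho_integrable: "set_integrable lborel {0..1} (\<lambda>t. \<rho> t z)"
proof -
  have "set_integrable lborel {0..1} (\<lambda>t. t * flux z t)"
    unfolding set_integrable_def
  proof (rule Bochner_Integration.integrable_bound)
    show "integrable lborel (\<lambda>t. indicator {0..1} t *\<^sub>R flux z t)"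
      using flux_integrable[of z] by (simp add: set_integrable_def)
    then show "(\<lambda>t. indicator {0..1} t *\<^sub>R (t * flux z t)) \<in> borel_measurable lborel"
      by (simp add: mult.left_commute[of "indicator _ _"])
    show "AE t in lborel. norm (indicator {0..1} t *\<^sub>R (t * flux z t)) \<le> norm (indicator {0..1} t *\<^sub>R flux z t)"
      by (rule AE_I2) (auto simp: indicator_def abs_mult intro: mult_left_le_one_le)
  qed
  moreover have "set_integrable lborel {0..1} (\<lambda>t. 1 * \<rho> t z * \<pi> z + t * flux z t)"
    using weak_form_scalar(1)[of "\<lambda>t. t" "\<lambda>_. 1" z] by simp
  ultimately have "set_integrable lborel {0..1} (\<lambda>t. ((1 * \<rho> t z * \<pi> z + t * flux z t) - t * flux z t) / \<pi> z)"
    by (intro set_integrable_divide set_integral_diff)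
  then show ?thesis
    using pi_pos[of z] by simp
qed

definition rho_deriv :: "real \<Rightarrow> 'x \<Rightarrow> real" where
  "rho_deriv t z = indicator {0..1} t * flux z t / \<pi> z"

definition rho_ac :: "real \<Rightarrow> 'x \<Rightarrow> real" where
  "rho_ac t z = \<rho>A z + (LINT s:{0..t}|lborel. rho_deriv s z)"

lemma rho_deriv_integrable: "integrable lborel (\<lambda>t. rho_deriv t z)"
  using flux_integrable[of z] unfolding rho_deriv_def set_integrable_def by simp

lemma rho_deriv_set_integrable: "A \<in> sets lborel \<Longrightarrow> set_integrable lborel A (\<lambda>t. rho_deriv t z)"
  unfolding set_integrable_def using rho_deriv_integrable[of z] by (intro integrable_mult_indicator)

lemma rho_ac_eq_integral: "rho_ac t z = \<rho>A z + integral {0..t} (\<lambda>s. rho_deriv s z)"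
  unfolding rho_ac_def by (simp add: set_borel_integral_eq_integral(2) rho_deriv_set_integrable)

lemma continuous_on_rho_ac: "continuous_on {0..1} (\<lambda>t. rho_ac t z)"
proof -
  have "(\<lambda>s. rho_deriv s z) integrable_on {0..1}"
    by (simp add: set_borel_integral_eq_integral(1) rho_deriv_set_integrable)
  then show ?thesis
    unfolding rho_ac_eq_integral by (intro continuous_intros indefinite_integral_continuous_1)
qed

lemma rho_ac_0: "rho_ac 0 z = \<rho>A z"
  by (simp add: rho_ac_eq_integral)

lemma rho_ac_diff:
  assumes "0 \<le> s" "s \<le> t"
  shows "rho_ac t z - rho_ac s z = (LINT x:{s..t}|lborel. rho_deriv x z)"
proof -
  have "(\<lambda>x. rho_deriv x z) integrable_on {0..t}"
    by (simp add: set_borel_integral_eq_integral(1) rho_deriv_set_integrable)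
  from Henstock_Kurzweil_Integration.integral_combine[OF assms this]
  have "integral {0..t} (\<lambda>x. rho_deriv x z) - integral {0..s} (\<lambda>x. rho_deriv x z)
      = integral {s..t} (\<lambda>x. rho_deriv x z)"
    by simp
  then show ?thesis
    by (simp add: rho_ac_eq_integral set_borel_integral_eq_integral(2) rho_deriv_set_integrable)
qed

lemma set_integral_flux:
  assumes "s \<in> {0..1}"
  shows "(LINT t:{0..s}|lborel. flux z t) = \<pi> z * (rho_ac s z - \<rho>A z)"
proof -
  have "(LINT t:{0..s}|lborel. rho_deriv t z) = (LINT t:{0..s}|lborel. flux z t / \<pi> z)"
    by (rule set_lebesgue_integral_cong) (use assms in \<open>auto simp: rho_deriv_def\<close>)
  then show ?thesis
    using pi_pos[of z] by (simp add: rho_ac_def)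
qed

lemma set_integrable_bounded_mult_rho:
  assumes [measurable]: "k \<in> borel_measurable borel" and k_bound: "\<And>s. \<bar>k s\<bar> \<le> 1"
  shows "set_integrable lborel {0..1} (\<lambda>t. k t * \<rho> t z * \<pi> z)"
  unfolding set_integrable_def
proof (rule Bochner_Integration.integrable_bound)
  have "set_integrable lborel {0..1} (\<lambda>t. \<rho> t z * \<pi> z)"
    using rho_integrable[of z] by simp
  then show "integrable lborel (\<lambda>t. indicator {0..1} t *\<^sub>R (\<rho> t z * \<pi> z))"
    by (simp add: set_integrable_def)
  then show "(\<lambda>t. indicator {0..1} t *\<^sub>R (k t * \<rho> t z * \<pi> z)) \<in> borel_measurable lborel"
    by (simp add: mult.left_commute[of "indicator _ _"] mult.assoc)
  show "AE t in lborel. norm (indicator {0..1} t *\<^sub>R (k t * \<rho> t z * \<pi> z))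
      \<le> norm (indicator {0..1} t *\<^sub>R (\<rho> t z * \<pi> z))"
    using k_bound by (intro AE_I2) (auto simp: abs_mult indicator_def mult.assoc intro!: mult_left_le_one_le)
qed

lemma set_integral_tail_integral_flux:
  fixes k :: "real \<Rightarrow> real"
  assumes k_cont: "continuous_on UNIV k" and k_bound: "\<And>s. \<bar>k s\<bar> \<le> 1"
  shows "(LINT t:{0..1}|lborel. (LINT s:{t..1}|lborel. k s) * flux z t)
       = (LINT s:{0..1}|lborel. k s * (\<pi> z * rho_ac s z)) - \<pi> z * \<rho>A z * (LINT s:{0..1}|lborel. k s)"
proof -
  have k_meas: "k \<in> borel_measurable borel"
    using k_cont by (intro borel_measurable_continuous_onI)
  have k_cont01: "continuous_on {0..1} k"
    using k_cont by (rule continuous_on_subset) simp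
  have "(LINT t:{0..1}|lborel. (LINT s:{t..1}|lborel. k s) * flux z t)
      = (LINT s:{0..1}|lborel. k s * (\<pi> z * (rho_ac s z - \<rho>A z)))"
    unfolding set_integral_swap_triangle[OF k_meas k_bound flux_integrable]
    by (rule set_lebesgue_integral_cong) (auto simp: set_integral_flux)
  also have "\<dots> = (LINT s:{0..1}|lborel. k s * (\<pi> z * rho_ac s z) - (\<pi> z * \<rho>A z) * k s)"
    by (rule set_lebesgue_integral_cong) (auto simp: algebra_simps)
  also have "\<dots> = (LINT s:{0..1}|lborel. k s * (\<pi> z * rho_ac s z)) - \<pi> z * \<rho>A z * (LINT s:{0..1}|lborel. k s)"
    using k_cont01 continuous_on_rho_ac[of z]
    by (simp add: set_integral_diff borel_integrable_atLeastAtMost' continuous_intros)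
  finally show ?thesis .
qed

lemma weak_form_continuous:
  fixes k :: "real \<Rightarrow> real"
  assumes k_cont: "continuous_on UNIV k" and k_bound: "\<And>s. \<bar>k s\<bar> \<le> 1"
  shows "(\<integral>t. k t * (indicator {0..1} t * (\<pi> z * \<rho> t z - \<pi> z * rho_ac t z)) \<partial>lborel) = 0"
proof -
  \<comment> \<open>Test with the primitive \<open>\<psi>\<close> of \<open>-k\<close> vanishing at 1 and swap the order of integration.\<close>
  define \<psi> where "\<psi> x = (LINT s:{x..1}|lborel. k s)" for x
  have k_meas[measurable]: "k \<in> borel_measurable borel"
    using k_cont by (intro borel_measurable_continuous_onI)
  have k_cont01: "continuous_on {a..b} k" for a b
    using k_cont by (rule continuous_on_subset) simp
  have deriv: "(\<psi> has_real_derivative - k t) (at t within {0..1})" if "t \<in> {0..1}" for t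
    unfolding \<psi>_def using k_cont01 that by (rule has_real_derivative_tail_integral)
  have "continuous_on {0..1} (\<lambda>t. - k t)"
    using k_cont01 by (intro continuous_intros)
  note weak = weak_form_scalar[of \<psi> "\<lambda>t. - k t", OF deriv this, of z]
  have \<psi>_1: "\<psi> 1 = 0"
    using k_cont01 by (simp add: \<psi>_def set_borel_integral_eq_integral(2) borel_integrable_atLeastAtMost')
  note k_\<rho> = set_integrable_bounded_mult_rho[OF k_meas k_bound, of z]
  have k_rho_ac: "set_integrable lborel {0..1} (\<lambda>t. k t * (\<pi> z * rho_ac t z))"
    using k_cont01 continuous_on_rho_ac[of z]
    by (intro borel_integrable_atLeastAtMost' continuous_intros)
  have minus_k_\<rho>: "set_integrable lborel {0..1} (\<lambda>t. - k t * \<rho> t z * \<pi> z)"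
    using k_\<rho> by (simp add: set_integrable_def)
  have \<psi>_flux: "set_integrable lborel {0..1} (\<lambda>t. \<psi> t * flux z t)"
    using set_integral_diff(1)[OF weak(1) minus_k_\<rho>] by simp
  have "(LINT t:{0..1}|lborel. - k t * \<rho> t z * \<pi> z) + (LINT t:{0..1}|lborel. \<psi> t * flux z t)
      = - (\<psi> 0 * \<rho>A z * \<pi> z)"
    using weak(2) \<psi>_1 set_integral_add(2)[OF minus_k_\<rho> \<psi>_flux] by simp
  moreover have "(LINT t:{0..1}|lborel. - k t * \<rho> t z * \<pi> z) = - (LINT t:{0..1}|lborel. k t * \<rho> t z * \<pi> z)"
    using set_integral_uminus[OF k_\<rho>] by simp
  moreover have "(LINT t:{0..1}|lborel. \<psi> t * flux z t)
      = (LINT t:{0..1}|lborel. k t * (\<pi> z * rho_ac t z)) - \<psi> 0 * \<rho>A z * \<pi> z"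
    using set_integral_tail_integral_flux[OF k_cont k_bound, of z] unfolding \<psi>_def by (simp add: mult_ac)
  ultimately have "(LINT t:{0..1}|lborel. k t * \<rho> t z * \<pi> z) = (LINT t:{0..1}|lborel. k t * (\<pi> z * rho_ac t z))"
    by linarith
  then have "(LINT t:{0..1}|lborel. k t * \<rho> t z * \<pi> z - k t * (\<pi> z * rho_ac t z)) = 0"
    using k_\<rho> k_rho_ac by (simp add: set_integral_diff)
  moreover have "(\<integral>t. k t * (indicator {0..1} t * (\<pi> z * \<rho> t z - \<pi> z * rho_ac t z)) \<partial>lborel)
      = (LINT t:{0..1}|lborel. k t * \<rho> t z * \<pi> z - k t * (\<pi> z * rho_ac t z))"
    unfolding set_lebesgue_integral_def
    by (rule Bochner_Integration.integral_cong) (simp_all add: algebra_simps)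
  ultimately show ?thesis
    by simp
qed

lemma AE_rho_eq_rho_ac: "AE t in lborel. t \<in> {0..1} \<longrightarrow> \<rho> t z = rho_ac t z"
proof -
  have "set_integrable lborel {0..1} (\<lambda>t. \<pi> z * \<rho> t z)"
    using rho_integrable[of z] by simp
  moreover have "set_integrable lborel {0..1} (\<lambda>t. \<pi> z * rho_ac t z)"
    using continuous_on_rho_ac[of z] by (intro borel_integrable_atLeastAtMost' continuous_intros)
  ultimately have "set_integrable lborel {0..1} (\<lambda>t. \<pi> z * \<rho> t z - \<pi> z * rho_ac t z)"
    by (rule set_integral_diff(1))
  then have "AE t in lborel. indicator {0..1} t * (\<pi> z * \<rho> t z - \<pi> z * rho_ac t z) = 0"
    unfolding set_integrable_def
    by (intro AE_zero_if_continuous_integrals_zero weak_form_continuous) simp_all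
  then show ?thesis
    by eventually_elim (use pi_pos[of z] in \<open>auto simp: indicator_def\<close>)
qed

lemma mass_rho_ac:
  assumes t: "t \<in> {0..1}"
  shows "(\<Sum>z\<in>UNIV. \<pi> z * rho_ac t z) = 1"
proof -
  have "(\<Sum>z\<in>UNIV. \<pi> z * rho_ac t z) = (\<Sum>z\<in>UNIV. \<pi> z * \<rho>A z) + (\<Sum>z\<in>UNIV. LINT s:{0..t}|lborel. flux z s)"
    using set_integral_flux[OF t] pi_pos by (simp add: sum.distrib[symmetric] algebra_simps)
  also have "(\<Sum>z\<in>UNIV. LINT s:{0..t}|lborel. flux z s) = (LINT s:{0..t}|lborel. (\<Sum>z\<in>UNIV. flux z s))"
    using set_integrable_subset[OF flux_integrable, of "{0..t}"] t
    unfolding set_lebesgue_integral_def scaleR_sum_right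
    by (intro Bochner_Integration.integral_sum[symmetric]) (auto simp: set_integrable_def)
  finally show ?thesis
    using initial by (simp add: prob_densities_def flux_def sum_inner_Q_grad_indicator)
qed

definition action_density :: "real \<Rightarrow> ennreal" where
  "action_density t = (\<Sum>x\<in>UNIV. \<Sum>y\<in>UNIV. alpha \<theta> (\<rho> t x) (\<rho> t y) (m t x y) * ennreal (Q x y * \<pi> x))"

lemma action_eq: "action \<theta> Q \<pi> \<rho> m = (1/2) * (\<integral>\<^sup>+t\<in>{0..1}. action_density t \<partial>lborel)"
  by (simp add: action_def action_density_def)

lemma action_density_integral_finite: "(\<integral>\<^sup>+t\<in>{0..1}. action_density t \<partial>lborel) < \<infinity>"
proof (rule ccontr)
  assume "\<not> ?thesis"
  then have "action \<theta> Q \<pi> \<rho> m = \<infinity>"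
    by (simp add: action_eq less_top[symmetric] ennreal_mult_top)
  then show False
    using action_le by (simp add: top_unique)
qed

lemma action_density_eq_top:
  assumes "\<rho> t z < 0" "0 < Q z y"
  shows "action_density t = \<infinity>"
proof -
  have top: "alpha \<theta> (\<rho> t z) (\<rho> t y) (m t z y) * ennreal (Q z y * \<pi> z) = \<infinity>"
    using assms pi_pos[of z] by (simp add: alpha_def ennreal_top_mult)
  have "alpha \<theta> (\<rho> t z) (\<rho> t y) (m t z y) * ennreal (Q z y * \<pi> z)
      \<le> (\<Sum>y'\<in>UNIV. alpha \<theta> (\<rho> t z) (\<rho> t y') (m t z y') * ennreal (Q z y' * \<pi> z))"
    by (rule member_le_sum) auto
  also have "\<dots> \<le> action_density t"
    unfolding action_density_def by (rule member_le_sum) auto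
  finally show ?thesis
    using top by (simp add: top_unique)
qed

lemma not_AE_negative_on_interval:
  assumes "a < b" "{a..b} \<subseteq> {0..1}" "0 < Q z y"
  shows "\<not> (AE t in lborel. t \<in> {a..b} \<longrightarrow> \<rho> t z < 0)"
proof
  assume "AE t in lborel. t \<in> {a..b} \<longrightarrow> \<rho> t z < 0"
  then have "AE t in lborel. \<infinity> * indicator {a..b} t \<le> action_density t * indicator {0..1} t"
    by eventually_elim (use assms action_density_eq_top in \<open>auto simp: indicator_def\<close>)
  then have "(\<integral>\<^sup>+t. \<infinity> * indicator {a..b} t \<partial>lborel) \<le> (\<integral>\<^sup>+t\<in>{0..1}. action_density t \<partial>lborel)"
    by (rule nn_integral_mono_AE)
  moreover have "(\<integral>\<^sup>+t. \<infinity> * indicator {a..b} t \<partial>lborel) = \<infinity>"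
    using assms(1) by (simp add: nn_integral_cmult_indicator ennreal_mult_eq_top_iff)
  ultimately show False
    using action_density_integral_finite by (simp add: top_unique)
qed

lemma flux_eq_0_if_no_rates:
  assumes "\<And>y. Q z y = 0"
  shows "flux z t = 0"
proof -
  have summand_0: "(indicator {z} a - indicator {z} b) * m t a b * Q a b * \<pi> a = 0" for a b
    using assms reversible[of a z] by (auto simp: indicator_def mult.commute)
  show ?thesis
    unfolding flux_def inner_Q_def grad_X_def by (simp only: summand_0 sum.neutral_const)
qed

lemma rho_ac_nonneg:
  assumes t: "t \<in> {0..1}"
  shows "0 \<le> rho_ac t z"
proof (cases "\<forall>y. Q z y = 0")
  case True
  then have "rho_deriv s z = 0" for s
    by (simp add: rho_deriv_def flux_eq_0_if_no_rates)
  then show ?thesis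
    using initial by (simp add: rho_ac_def prob_densities_def)
next
  case False
  then obtain y where "0 < Q z y"
    using rate_nonneg by (metis order_le_less)
  show ?thesis
  proof (rule ccontr)
    assume "\<not> 0 \<le> rho_ac t z"
    then have "rho_ac t z < 0" by simp
    then obtain a b where ab: "a < b" "{a..b} \<subseteq> {0..1}" and neg: "\<And>x. x \<in> {a..b} \<Longrightarrow> rho_ac x z < 0"
      by (rule negative_on_interval[OF continuous_on_rho_ac zero_less_one t]) blast
    have "AE x in lborel. x \<in> {a..b} \<longrightarrow> \<rho> x z < 0"
      using AE_rho_eq_rho_ac[of z] by eventually_elim (use ab neg in auto)
    with not_AE_negative_on_interval[OF ab \<open>0 < Q z y\<close>] show False ..
  qed
qed

lemma rho_ac_le_density_bound:
  assumes t: "t \<in> {0..1}"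
  shows "rho_ac t z \<le> density_bound \<pi>"
proof -
  have "\<pi> z * rho_ac t z \<le> (\<Sum>x\<in>UNIV. \<pi> x * rho_ac t x)"
    by (intro member_le_sum mult_nonneg_nonneg less_imp_le pi_pos rho_ac_nonneg t) simp_all
  then have "rho_ac t z \<le> 1 / \<pi> z"
    using mass_rho_ac[OF t] pi_pos[of z] by (simp add: field_simps)
  then show ?thesis
    using inv_pi_le_density_bound[of z] by linarith
qed

lemma AE_rho_bounds: "AE t in lborel. t \<in> {0..1} \<longrightarrow> (\<forall>x. 0 \<le> \<rho> t x \<and> \<rho> t x \<le> density_bound \<pi>)"
proof -
  have "AE t in lborel. \<forall>x\<in>UNIV. t \<in> {0..1} \<longrightarrow> \<rho> t x = rho_ac t x"
    by (rule AE_finite_allI[OF finite_class.finite_UNIV]) (rule AE_rho_eq_rho_ac)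
  then show ?thesis
    by eventually_elim (auto simp: rho_ac_nonneg rho_ac_le_density_bound)
qed

lemma inner_Q_le_action_density:
  assumes bounds: "\<And>x. 0 \<le> \<rho> t x \<and> \<rho> t x \<le> density_bound \<pi>"
  shows "ennreal (inner_Q Q \<pi> (m t) (m t)) \<le> ennreal (density_bound \<pi> / 2) * action_density t"
proof -
  have "inner_Q Q \<pi> (m t) (m t) = (1/2) * (\<Sum>x\<in>UNIV. \<Sum>y\<in>UNIV. (m t x y)\<^sup>2 * (Q x y * \<pi> x))"
    unfolding inner_Q_def by (simp add: power2_eq_square mult_ac)
  then have "ennreal (inner_Q Q \<pi> (m t) (m t))
      = ennreal ((1/2) * (\<Sum>x\<in>UNIV. \<Sum>y\<in>UNIV. (m t x y)\<^sup>2 * (Q x y * \<pi> x)))"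
    by (rule arg_cong)
  also have "\<dots> = ennreal (1/2) * ennreal (\<Sum>x\<in>UNIV. \<Sum>y\<in>UNIV. (m t x y)\<^sup>2 * (Q x y * \<pi> x))"
    by (rule ennreal_mult') simp
  also have "\<dots> = ennreal (1/2) * (\<Sum>x\<in>UNIV. \<Sum>y\<in>UNIV. ennreal ((m t x y)\<^sup>2 * (Q x y * \<pi> x)))"
    using weight_nonneg by (simp add: sum_nonneg)
  also have "\<dots> = ennreal (1/2) * (\<Sum>x\<in>UNIV. \<Sum>y\<in>UNIV. ennreal ((m t x y)\<^sup>2) * ennreal (Q x y * \<pi> x))"
    by (intro arg_cong[where f="(*) _"] sum.cong refl ennreal_mult') simp
  also have "\<dots> \<le> ennreal (1/2) * (\<Sum>x\<in>UNIV. \<Sum>y\<in>UNIV.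
      (ennreal (density_bound \<pi>) * alpha \<theta> (\<rho> t x) (\<rho> t y) (m t x y)) * ennreal (Q x y * \<pi> x))"
    using bounds
    by (intro mult_left_mono sum_mono mult_right_mono square_le_mult_alpha[OF averaging density_bound_pos])
      simp_all
  also have "\<dots> = ennreal (density_bound \<pi> / 2) * action_density t"
  proof -
    have "ennreal (density_bound \<pi> / 2) = ennreal (1/2) * ennreal (density_bound \<pi>)"
      using ennreal_mult'[of "1/2" "density_bound \<pi>"] by simp
    then show ?thesis
      unfolding action_density_def by (simp only: sum_distrib_left mult_ac)
  qed
  finally show ?thesis .
qed

lemma momentum_L2_bound:
  "(\<integral>\<^sup>+t\<in>{0..1}. ennreal (inner_Q Q \<pi> (m t) (m t)) \<partial>lborel) \<le> ennreal (momentum_bound \<pi> Ebar)"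
proof -
  have "(\<integral>\<^sup>+t\<in>{0..1}. ennreal (inner_Q Q \<pi> (m t) (m t)) \<partial>lborel)
      \<le> (\<integral>\<^sup>+t. ennreal (density_bound \<pi> / 2) * (action_density t * indicator {0..1} t) \<partial>lborel)"
    using AE_rho_bounds
    by (rule nn_integral_mono_AE[OF eventually_mono])
      (auto simp: indicator_def inner_Q_le_action_density)
  also have "\<dots> \<le> ennreal (density_bound \<pi> / 2) * (\<integral>\<^sup>+t\<in>{0..1}. action_density t \<partial>lborel)"
    using density_bound_pos by (intro nn_integral_cmult_le) simp
  also have "\<dots> = ennreal (density_bound \<pi>) * action \<theta> Q \<pi> \<rho> m"
  proof -
    have half: "(1/2 :: ennreal) = ennreal (1/2)"
      using divide_ennreal[of 1 2] by simp
    have "ennreal (density_bound \<pi> / 2) = ennreal (density_bound \<pi>) * ennreal (1/2)"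
      using ennreal_mult''[of "1/2" "density_bound \<pi>"] by simp
    then show ?thesis
      unfolding action_eq half by (simp only: mult.assoc)
  qed
  also have "\<dots> \<le> ennreal (density_bound \<pi>) * ennreal Ebar"
    by (rule mult_left_mono[OF action_le]) simp
  also have "\<dots> = ennreal (momentum_bound \<pi> Ebar)"
    using density_bound_pos
    by (simp add: momentum_bound_def ennreal_mult' max_def ennreal_neg)
  finally show ?thesis .
qed

lemma flux_square_le: "(flux z t)\<^sup>2 \<le> rate_mass Q \<pi> / 2 * inner_Q Q \<pi> (m t) (m t)"
proof -
  have "(flux z t)\<^sup>2
      \<le> inner_Q Q \<pi> (grad_X (indicator {z})) (grad_X (indicator {z})) * inner_Q Q \<pi> (m t) (m t)"
    unfolding flux_def by (rule inner_Q_square_le[OF weight_nonneg])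
  also have "\<dots> \<le> rate_mass Q \<pi> / 2 * inner_Q Q \<pi> (m t) (m t)"
    by (intro mult_right_mono inner_Q_grad_indicator_le inner_Q_self_nonneg weight_nonneg)
  finally show ?thesis .
qed

lemma inner_pi_rho_deriv_le:
  "inner_pi \<pi> (rho_deriv t) (rho_deriv t)
     \<le> real CARD('x) * density_bound \<pi> * rate_mass Q \<pi> / 2 * inner_Q Q \<pi> (m t) (m t)"
proof -
  have "rho_deriv t z * rho_deriv t z * \<pi> z
      \<le> density_bound \<pi> * (rate_mass Q \<pi> / 2 * inner_Q Q \<pi> (m t) (m t))" for z
  proof -
    have "rho_deriv t z * rho_deriv t z * \<pi> z = indicator {0..1} t * ((flux z t)\<^sup>2 * (1 / \<pi> z))"
      using pi_pos[of z] by (simp add: rho_deriv_def power2_eq_square indicator_def field_simps)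
    also have "\<dots> \<le> 1 * ((rate_mass Q \<pi> / 2 * inner_Q Q \<pi> (m t) (m t)) * density_bound \<pi>)"
      using flux_square_le[of z t] inv_pi_le_density_bound[of z] pi_pos[of z]
        rate_mass_nonneg inner_Q_self_nonneg
      by (intro mult_mono) (auto simp: indicator_def)
    finally show ?thesis by (simp add: mult_ac)
  qed
  then have "inner_pi \<pi> (rho_deriv t) (rho_deriv t)
      \<le> (\<Sum>z\<in>(UNIV::'x set). density_bound \<pi> * (rate_mass Q \<pi> / 2 * inner_Q Q \<pi> (m t) (m t)))"
    unfolding inner_pi_def by (intro sum_mono)
  then show ?thesis
    by (simp add: mult_ac)
qed

lemma rho_deriv_L2_bound:
  "(\<integral>\<^sup>+t\<in>{0..1}. ennreal (inner_pi \<pi> (rho_deriv t) (rho_deriv t)) \<partial>lborel) \<le> ennreal (deriv_bound Q \<pi> Ebar)"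
proof -
  define K where "K = real CARD('x) * density_bound \<pi> * rate_mass Q \<pi> / 2"
  have K: "0 \<le> K"
    using density_bound_pos rate_mass_nonneg by (simp add: K_def)
  have "(\<integral>\<^sup>+t\<in>{0..1}. ennreal (inner_pi \<pi> (rho_deriv t) (rho_deriv t)) \<partial>lborel)
      \<le> (\<integral>\<^sup>+t. ennreal K * (ennreal (inner_Q Q \<pi> (m t) (m t)) * indicator {0..1} t) \<partial>lborel)"
    using inner_pi_rho_deriv_le K
    by (intro nn_integral_mono) (auto simp: indicator_def K_def ennreal_mult'[symmetric] intro: ennreal_leI)
  also have "\<dots> \<le> ennreal K * (\<integral>\<^sup>+t\<in>{0..1}. ennreal (inner_Q Q \<pi> (m t) (m t)) \<partial>lborel)"
    using K by (rule nn_integral_cmult_le)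
  also have "\<dots> \<le> ennreal K * ennreal (momentum_bound \<pi> Ebar)"
    by (rule mult_left_mono[OF momentum_L2_bound]) simp
  also have "\<dots> = ennreal (deriv_bound Q \<pi> Ebar)"
    using K by (simp add: deriv_bound_def K_def ennreal_mult'[symmetric])
  finally show ?thesis .
qed

lemma rho_deriv_square_le: "(rho_deriv t z)\<^sup>2 \<le> density_bound \<pi> * inner_pi \<pi> (rho_deriv t) (rho_deriv t)"
proof -
  have le_sum: "rho_deriv t z * rho_deriv t z * \<pi> z \<le> inner_pi \<pi> (rho_deriv t) (rho_deriv t)"
    unfolding inner_pi_def
    by (intro member_le_sum mult_nonneg_nonneg[OF zero_le_square less_imp_le[OF pi_pos]]) simp_all
  have "(rho_deriv t z)\<^sup>2 = (rho_deriv t z * rho_deriv t z * \<pi> z) * (1 / \<pi> z)"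
    using pi_pos[of z] by (simp add: power2_eq_square)
  also have "\<dots> \<le> inner_pi \<pi> (rho_deriv t) (rho_deriv t) * density_bound \<pi>"
    using le_sum inv_pi_le_density_bound[of z] pi_pos[of z]
    by (intro mult_mono) (auto intro: order_trans[OF _ le_sum])
  finally show ?thesis by (simp add: mult.commute)
qed

lemma rho_deriv_component_L2:
  "(\<integral>\<^sup>+t. ennreal ((rho_deriv t z)\<^sup>2) \<partial>lborel) \<le> ennreal (density_bound \<pi> * deriv_bound Q \<pi> Ebar)"
proof -
  have "(\<integral>\<^sup>+t. ennreal ((rho_deriv t z)\<^sup>2) \<partial>lborel)
      \<le> (\<integral>\<^sup>+t. ennreal (density_bound \<pi>) * (ennreal (inner_pi \<pi> (rho_deriv t) (rho_deriv t)) * indicator {0..1} t) \<partial>lborel)"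
  proof (rule nn_integral_mono)
    fix t
    show "ennreal ((rho_deriv t z)\<^sup>2)
        \<le> ennreal (density_bound \<pi>) * (ennreal (inner_pi \<pi> (rho_deriv t) (rho_deriv t)) * indicator {0..1} t)"
    proof (cases "t \<in> {0..1}")
      case True
      then show ?thesis
        using rho_deriv_square_le[of t z] density_bound_pos
        by (simp add: ennreal_mult'[symmetric] ennreal_leI)
    qed (simp add: rho_deriv_def)
  qed
  also have "\<dots> \<le> ennreal (density_bound \<pi>) * (\<integral>\<^sup>+t\<in>{0..1}. ennreal (inner_pi \<pi> (rho_deriv t) (rho_deriv t)) \<partial>lborel)"
    using density_bound_pos by (intro nn_integral_cmult_le) simp
  also have "\<dots> \<le> ennreal (density_bound \<pi>) * ennreal (deriv_bound Q \<pi> Ebar)"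
    by (rule mult_left_mono[OF rho_deriv_L2_bound]) simp
  also have "\<dots> = ennreal (density_bound \<pi> * deriv_bound Q \<pi> Ebar)"
    using density_bound_pos by (simp add: ennreal_mult')
  finally show ?thesis .
qed

lemma rho_ac_holder:
  assumes "s \<in> {0..1}" "t \<in> {0..1}"
  shows "\<bar>rho_ac t z - rho_ac s z\<bar> \<le> path_bound Q \<pi> Ebar * sqrt \<bar>t - s\<bar>"
proof -
  define B where "B = density_bound \<pi> * deriv_bound Q \<pi> Ebar"
  have holder: "\<bar>rho_ac t' z - rho_ac s' z\<bar> \<le> sqrt B * sqrt (t' - s')"
    if "0 \<le> s'" "s' \<le> t'" for s' t'
  proof -
    have "(\<integral>\<^sup>+x\<in>{s'..t'}. ennreal ((rho_deriv x z)\<^sup>2) \<partial>lborel) \<le> (\<integral>\<^sup>+x. ennreal ((rho_deriv x z)\<^sup>2) \<partial>lborel)"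
      by (intro nn_integral_mono) (simp add: indicator_def)
    also have "\<dots> \<le> ennreal B"
      unfolding B_def by (rule rho_deriv_component_L2)
    finally show ?thesis
      unfolding rho_ac_diff[OF that]
      using that density_bound_pos deriv_bound_nonneg
      by (intro abs_set_integral_le_sqrt_L2 rho_deriv_set_integrable) (auto simp: B_def)
  qed
  have "\<bar>rho_ac t z - rho_ac s z\<bar> \<le> sqrt B * sqrt \<bar>t - s\<bar>"
    using holder[of s t] holder[of t s] assms by (cases "s \<le> t") (auto simp: abs_minus_commute)
  also have "\<dots> \<le> path_bound Q \<pi> Ebar * sqrt \<bar>t - s\<bar>"
    using path_bound_ge(4)[of Ebar] unfolding B_def by (rule mult_right_mono) simp
  finally show ?thesis .
qed

lemma abs_rho_ac_le_path_bound:
  assumes "t \<in> {0..1}"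
  shows "\<bar>rho_ac t z\<bar> \<le> path_bound Q \<pi> Ebar"
  using rho_ac_nonneg[OF assms, of z] rho_ac_le_density_bound[OF assms, of z] path_bound_ge(3)[of Ebar]
  by (metis abs_of_nonneg order_trans)

lemma rho_ac_L2_bound:
  "(\<integral>\<^sup>+t\<in>{0..1}. ennreal (inner_pi \<pi> (rho_ac t) (rho_ac t)) \<partial>lborel) \<le> ennreal ((density_bound \<pi>)\<^sup>2)"
proof -
  have pointwise: "inner_pi \<pi> (rho_ac t) (rho_ac t) \<le> (density_bound \<pi>)\<^sup>2" if t: "t \<in> {0..1}" for t
  proof -
    have "inner_pi \<pi> (rho_ac t) (rho_ac t) \<le> (\<Sum>x\<in>UNIV. (density_bound \<pi>)\<^sup>2 * \<pi> x)"
      unfolding inner_pi_def power2_eq_square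
      using rho_ac_nonneg[OF t] rho_ac_le_density_bound[OF t] pi_pos less_imp_le[OF density_bound_pos]
      by (intro sum_mono mult_right_mono mult_mono) (auto intro: less_imp_le)
    then show ?thesis
      by (simp add: sum_distrib_left[symmetric] sum_pi)
  qed
  have "(\<integral>\<^sup>+t\<in>{0..1}. ennreal (inner_pi \<pi> (rho_ac t) (rho_ac t)) \<partial>lborel)
      \<le> (\<integral>\<^sup>+t. ennreal ((density_bound \<pi>)\<^sup>2) * indicator {0..1::real} t \<partial>lborel)"
  proof (rule nn_integral_mono)
    fix t
    show "ennreal (inner_pi \<pi> (rho_ac t) (rho_ac t)) * indicator {0..1} t
        \<le> ennreal ((density_bound \<pi>)\<^sup>2) * indicator {0..1} t"
      using pointwise[of t] by (cases "t \<in> {0..1}") (auto intro: ennreal_leI)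
  qed
  then show ?thesis
    by (simp add: nn_integral_cmult_indicator)
qed

lemma AE_rho_ac_eq: "AE t in lborel. t \<in> {0..1} \<longrightarrow> rho_ac t = \<rho> t"
proof -
  have "AE t in lborel. \<forall>x\<in>UNIV. t \<in> {0..1} \<longrightarrow> \<rho> t x = rho_ac t x"
    by (rule AE_finite_allI[OF finite_class.finite_UNIV]) (rule AE_rho_eq_rho_ac)
  then show ?thesis
    by eventually_elim auto
qed

end

lemma finite_action_path_if_energy_le:
  assumes "markov_setting Q \<pi>" "averaging_function \<theta>" "\<rho>A \<in> prob_densities \<pi>"
    and energy: "energy \<theta> Q \<pi> \<rho>A \<rho>B \<rho> m \<le> ennreal Ebar"
  shows "finite_action_path Q \<pi> \<theta> Ebar \<rho>A \<rho>B \<rho> m"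
proof -
  have "(\<rho>, m) \<in> CE Q \<pi> \<rho>A \<rho>B"
    using energy by (rule contrapos_pp) (simp add: energy_def top_unique)
  with assms show ?thesis
    by unfold_locales (simp_all add: energy_def)
qed

theorem lemma2p5:
  fixes Q :: "'x::finite \<Rightarrow> 'x \<Rightarrow> real" and \<pi> :: "'x \<Rightarrow> real"
    and \<theta> :: "real \<Rightarrow> real \<Rightarrow> real" and Ebar :: real
  assumes "markov_setting Q \<pi>" and "averaging_function \<theta>"
  shows "\<exists>C::real. \<forall>\<rho>A \<rho>B (\<rho> :: real \<Rightarrow> 'x \<Rightarrow> real) (m :: real \<Rightarrow> 'x \<Rightarrow> 'x \<Rightarrow> real).
     \<rho>A \<in> prob_densities \<pi> \<longrightarrow> \<rho>B \<in> prob_densities \<pi> \<longrightarrow>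
     (\<forall>x. set_borel_measurable lborel {0..1} (\<lambda>t. \<rho> t x)) \<longrightarrow>
     (\<forall>x y. set_borel_measurable lborel {0..1} (\<lambda>t. m t x y)) \<longrightarrow>
     energy \<theta> Q \<pi> \<rho>A \<rho>B \<rho> m \<le> ennreal Ebar \<longrightarrow>
       \<comment> \<open>m bounded in L^2((0,1)) w.r.t. the Q-inner product\<close>
       (\<integral>\<^sup>+ t\<in>{0..1}. ennreal (inner_Q Q \<pi> (m t) (m t)) \<partial>lborel) \<le> ennreal C \<and>
       \<comment> \<open>rho has a representative in H^{1,2} \<inter> C^{0,1/2} with norms bounded by C\<close>
       (\<exists>\<rho>' (g :: real \<Rightarrow> 'x \<Rightarrow> real).
          (AE t in lborel. t \<in> {0..1} \<longrightarrow> \<rho>' t = \<rho> t) \<and>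
          (\<forall>x. continuous_on {0..1} (\<lambda>t. \<rho>' t x)) \<and>
          (\<forall>x. set_integrable lborel {0..1} (\<lambda>t. g t x)) \<and>
          (\<forall>t\<in>{0..1}. \<forall>x. \<rho>' t x = \<rho>' 0 x + (LINT s:{0..t}|lborel. g s x)) \<and>
          (\<integral>\<^sup>+ t\<in>{0..1}. ennreal (inner_pi \<pi> (\<rho>' t) (\<rho>' t)) \<partial>lborel)
            + (\<integral>\<^sup>+ t\<in>{0..1}. ennreal (inner_pi \<pi> (g t) (g t)) \<partial>lborel) \<le> ennreal C \<and>
          (\<forall>t\<in>{0..1}. \<forall>x. \<bar>\<rho>' t x\<bar> \<le> C) \<and>
          (\<forall>s\<in>{0..1}. \<forall>t\<in>{0..1}. \<forall>x. \<bar>\<rho>' t x - \<rho>' s x\<bar> \<le> C * sqrt \<bar>t - s\<bar>))"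
proof (intro exI[of _ "path_bound Q \<pi> Ebar"] allI impI, goal_cases)
  case (1 \<rho>A \<rho>B \<rho> m)
  interpret finite_action_path Q \<pi> \<theta> Ebar \<rho>A \<rho>B \<rho> m
    using assms 1 by (intro finite_action_path_if_energy_le)
  have "(\<integral>\<^sup>+t\<in>{0..1}. ennreal (inner_Q Q \<pi> (m t) (m t)) \<partial>lborel) \<le> ennreal (path_bound Q \<pi> Ebar)"
    using momentum_L2_bound path_bound_ge(1)[of Ebar] by (meson ennreal_leI order_trans)
  moreover have "(\<integral>\<^sup>+t\<in>{0..1}. ennreal (inner_pi \<pi> (rho_ac t) (rho_ac t)) \<partial>lborel)
      + (\<integral>\<^sup>+t\<in>{0..1}. ennreal (inner_pi \<pi> (rho_deriv t) (rho_deriv t)) \<partial>lborel)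
      \<le> ennreal (path_bound Q \<pi> Ebar)"
    using add_mono[OF rho_ac_L2_bound rho_deriv_L2_bound] path_bound_ge(2)[of Ebar] deriv_bound_nonneg
    by (simp add: ennreal_plus[symmetric] del: ennreal_plus) (meson ennreal_leI order_trans)
  moreover have "\<forall>t\<in>{0..1}. \<forall>x. rho_ac t x = rho_ac 0 x + (LINT s:{0..t}|lborel. rho_deriv s x)"
    by (simp only: rho_ac_0) (simp add: rho_ac_def)
  moreover have "\<forall>x. set_integrable lborel {0..1} (\<lambda>t. rho_deriv t x)"
    by (simp add: rho_deriv_set_integrable)
  ultimately show ?case
    using AE_rho_ac_eq continuous_on_rho_ac abs_rho_ac_le_path_bound rho_ac_holder by blast
qed

end
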